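(* Consider the SR2 method (described in the context) applied to $\min_x F(x) := f(x) + \mathcal{R}(x)$, and suppose Assumptions (A1), (A3) and (A5) of the context hold. Let $0<\epsilon<1$ and let $t(\epsilon)$ be the first iteration with $\mathbb{E}_{\hat\xi_{t}}[\|s^\xi\|^2]\le\epsilon^2$. Then $$\mathbb{E}_{\hat\xi_{t(\epsilon)}}\big[\operatorname{dist}\big(0,\hat\partial F(x_{t(\epsilon)}+s^\xi)\big)^2\big] \le C\epsilon^2 + 3\,\mathbb{E}_{\hat\xi_{t(\epsilon)}}\big[\|\nabla f(x_{t(\epsilon)}) - g^\xi\|^2\big],$$ where $C = 3(L^2+\sigma_{\max}^2)$.
   Context: Problem: $F(x) = f(x) + \mathcal{R}(x)$ with $f(x) = \frac{1}{N}\sum_{i=1}^N f_i(x)$, $f_i:\mathbb{R}^n\to\mathbb{R}$ differentiable, and $\mathcal{R}:\mathbb{R}^n \to \mathbb{R}\cup\{\pm\infty\}$. For a nonempty sample $\xi \subseteq \{1,\dots,N\}$ set $f(x,\xi) := \frac{1}{|\xi|}\sum_{j\in\xi} f_j(x)$ and $\nabla f(x,\xi) := \frac{1}{|\xi|}\sum_{j\in\xi}\nabla f_j(x)$. A function $\mathcal{R}$ is proper if it never equals $-\infty$ and is finite somewhere; it is prox-bounded if there are $x$ and $\mu>0$ with $\inf_w \{\tfrac{1}{2}\mu^{-1}\|x-w\|^2 + \mathcal{R}(w)\} > -\infty$; the supremum of such $\mu$ is its prox-boundedness threshold. The Fréchet subdifferential $\hat\partial\phi(\bar x)$ of $\phi$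 at a point $\bar x$ where $\phi$ is finite is the set of $v$ with $\liminf_{x\to\bar x, x\ne\bar x} \frac{\phi(x)-\phi(\bar x)-v^T(x-\bar x)}{\|x-\bar x\|}\ge 0$. SR2 algorithm: parameters $0<\eta_1\le\eta_2<1$, $0<\gamma_3\le 1<\gamma_1\le\gamma_2$, a starting point $x_0$ where $\mathcal{R}$ is finite, $\sigma_0 \ge \sigma_{\min} > 0$. At iteration $t$: draw a random sample $\xi_t$, set $g_t := \nabla f(x_t,\xi_t)$, $\psi(s;x_t) := f(x_t,\xi_t) + g_t^T s + \mathcal{R}(x_t+s)$, $m(s;x_t,\sigma_t) := \psi(s;x_t) + \tfrac12\sigma_t\|s\|^2$, and compute $s_t \in \operatorname{argmin}_s m(s;x_t,\sigma_t)$ (if the sample is deemed inadequate, $s_t$ is set to $0$). Compute $\Delta F_t := F(x_t) - F(x_t+s_t)$, $\Delta\psi_t := \psi(0;x_t)-\psi(s_t;x_t)$, $\rho_t := \Delta F_t/\Delta\psi_t$ (with the convention $\rho_t = 0$ when $\Delta\psi_t = +\infty$). If $\rho_t \ge \eta_1$ (a successful iteration) set $x_{t+1} = x_t + s_t$, else $x_{t+1}=x_t$. Then choose $\sigma_{t+1} \in [\max(\sigma_{\min},\gamma_3\sigma_t),\sigma_t]$ if $\rho_t\ge\eta_2$; $\sigma_{t+1}\in[\sigma_t,\gamma_1\sigma_t]$ if $\eta_1\le\rho_t<\eta_2$; $\sigma_{t+1}\in[\gamma_1\sigma_t,\gamma_2\sigma_t]$ if $\rho_t<\eta_1$. Assumptions.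 (A1): there is $L>0$ with $\|\nabla f(x)-\nabla f(y)\|\le L\|x-y\|$ for all $x,y$; $\mathcal{R}$ is proper and lower semicontinuous everywhere, and $s\mapsto\mathcal{R}(x_t+s)$ is prox-bounded, with threshold $\lambda_{x_t}$, for every iterate $x_t$. (A3): there is $\kappa_m>0$ such that for all $t$, $|f(x_t+s_t)-f(x_t)-g_t^Ts_t| \le \kappa_m\|s_t\|^2$; moreover $\mathbb{E}_\xi[f(x_t,\xi)] = f(x_t)$ and $\mathbb{E}_\xi[g_t] = \nabla f(x_t)$. (A5): there is $\lambda>0$ with $\lambda_{x_t}\ge\lambda$ for all iterates $x_t$. Notation: $\sigma_{\max}$ is a constant with $\sigma_t\le\sigma_{\max}$ for all $t$ (e.g. $\max\{\sigma_0,\gamma_2\sigma_{\textup{succ}}\}$ with $\sigma_{\textup{succ}} := \max(2\kappa_m/(1-\eta_2),1/\lambda)$). For a sample $\xi$ drawn at iterate $x_t$, $g^\xi := \nabla f(x_t,\xi)$ and $s^\xi$ is the corresponding step; $\mathbb{E}_{\hat\xi_t}$ denotes expectation over the distribution of samples $\xi$ that yield a successful iteration given $x_t$. *)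

theory Defs
  imports "HOL-Analysis.Analysis" "HOL-Probability.Probability"
begin

(* Euclidean space R^n is modelled as real^'n.  Component functions f_i are indexed by
   i in {1..N}; a sample is a finite set xi of indices (nonempty subset of {1..N}). *)

definition grad :: "(real^'n \<Rightarrow> real) \<Rightarrow> real^'n \<Rightarrow> real^'n" where
  "grad \<phi> x = (THE D. GDERIV \<phi> x :> D)"

definition fbar :: "(nat \<Rightarrow> real^'n \<Rightarrow> real) \<Rightarrow> nat \<Rightarrow> real^'n \<Rightarrow> real" where
  "fbar fi N x = (\<Sum>i\<in>{1..N}. fi i x) / real N"

definition fsamp :: "(nat \<Rightarrow> real^'n \<Rightarrow> real) \<Rightarrow> nat set \<Rightarrow> real^'n \<Rightarrow> real" where
  "fsamp fi \<xi> x = (\<Sum>j\<in>\<xi>. fi j x) / real (card \<xi>)"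

definition gsamp :: "(nat \<Rightarrow> real^'n \<Rightarrow> real) \<Rightarrow> nat set \<Rightarrow> real^'n \<Rightarrow> real^'n" where
  "gsamp fi \<xi> x = (1 / real (card \<xi>)) *\<^sub>R (\<Sum>j\<in>\<xi>. grad (fi j) x)"

definition Fobj :: "(nat \<Rightarrow> real^'n \<Rightarrow> real) \<Rightarrow> nat \<Rightarrow> (real^'n \<Rightarrow> ereal) \<Rightarrow> real^'n \<Rightarrow> ereal" where
  "Fobj fi N R x = ereal (fbar fi N x) + R x"

definition psi :: "(nat \<Rightarrow> real^'n \<Rightarrow> real) \<Rightarrow> (real^'n \<Rightarrow> ereal) \<Rightarrow> nat set \<Rightarrow> real^'n \<Rightarrow> real^'n \<Rightarrow> ereal" where
  "psi fi R \<xi> x s = ereal (fsamp fi \<xi> x + gsamp fi \<xi> x \<bullet> s) + R (x + s)"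

definition model :: "(nat \<Rightarrow> real^'n \<Rightarrow> real) \<Rightarrow> (real^'n \<Rightarrow> ereal) \<Rightarrow> nat set \<Rightarrow> real^'n \<Rightarrow> real \<Rightarrow> real^'n \<Rightarrow> ereal" where
  "model fi R \<xi> x \<sigma> s = psi fi R \<xi> x s + ereal (\<sigma> / 2 * (norm s)^2)"

definition is_model_minimizer ::
  "(nat \<Rightarrow> real^'n \<Rightarrow> real) \<Rightarrow> (real^'n \<Rightarrow> ereal) \<Rightarrow> nat set \<Rightarrow> real^'n \<Rightarrow> real \<Rightarrow> real^'n \<Rightarrow> bool" where
  "is_model_minimizer fi R \<xi> x \<sigma> s \<longleftrightarrow> (\<forall>s'. model fi R \<xi> x \<sigma> s \<le> model fi R \<xi> x \<sigma> s')"

definition rho :: "(nat \<Rightarrow> real^'n \<Rightarrow> real) \<Rightarrow> nat \<Rightarrow> (real^'n \<Rightarrow> ereal) \<Rightarrow> nat set \<Rightarrow> real^'n \<Rightarrow> real^'n \<Rightarrow> ereal" where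
  "rho fi N R \<xi> x s =
     (let dF = Fobj fi N R x - Fobj fi N R (x + s);
          dpsi = psi fi R \<xi> x 0 - psi fi R \<xi> x s
      in if dpsi = \<infinity> then 0 else dF / dpsi)"

definition proper_fun :: "('a \<Rightarrow> ereal) \<Rightarrow> bool" where
  "proper_fun R \<longleftrightarrow> (\<forall>x. R x \<noteq> -\<infinity>) \<and> (\<exists>x. \<bar>R x\<bar> \<noteq> \<infinity>)"

definition lsc_everywhere :: "('a::topological_space \<Rightarrow> ereal) \<Rightarrow> bool" where
  "lsc_everywhere R \<longleftrightarrow> (\<forall>x. R x \<le> Liminf (at x) R)"

definition prox_bounded_at :: "(real^'n \<Rightarrow> ereal) \<Rightarrow> real \<Rightarrow> bool" where
  "prox_bounded_at R \<mu> \<longleftrightarrow> \<mu> > 0 \<and>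
     (\<exists>x. (INF w. ereal (1 / 2 * inverse \<mu> * (norm (x - w))^2) + R w) > -\<infinity>)"

definition prox_bounded :: "(real^'n \<Rightarrow> ereal) \<Rightarrow> bool" where
  "prox_bounded R \<longleftrightarrow> (\<exists>\<mu>. prox_bounded_at R \<mu>)"

definition prox_threshold :: "(real^'n \<Rightarrow> ereal) \<Rightarrow> ereal" where
  "prox_threshold R = Sup (ereal ` {\<mu>. prox_bounded_at R \<mu>})"

definition frechet_subdiff :: "(real^'n \<Rightarrow> ereal) \<Rightarrow> real^'n \<Rightarrow> (real^'n) set" where
  "frechet_subdiff \<phi> xb =
     (if \<bar>\<phi> xb\<bar> = \<infinity> then {}
      else {v. Liminf (at xb)
                 (\<lambda>x. (\<phi> x - \<phi> xb - ereal (v \<bullet> (x - xb))) / ereal (norm (x - xb))) \<ge> 0})"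

(* dist(0, S), with dist(0, {}) = +infinity *)
definition dist0 :: "(real^'n) set \<Rightarrow> ennreal" where
  "dist0 S = (INF v\<in>S. ennreal (norm v))"

definition succ_samples ::
  "(nat \<Rightarrow> real^'n \<Rightarrow> real) \<Rightarrow> nat \<Rightarrow> (real^'n \<Rightarrow> ereal) \<Rightarrow> real \<Rightarrow> nat set pmf \<Rightarrow> real^'n
   \<Rightarrow> (nat set \<Rightarrow> real^'n) \<Rightarrow> nat set set" where
  "succ_samples fi N R \<eta>1 D x step = {\<xi> \<in> set_pmf D. rho fi N R \<xi> x (step \<xi>) \<ge> ereal \<eta>1}"

(* E over samples yielding a successful iteration: conditional distribution of D on the
   successful samples *)
definition Ehat :: "nat set pmf \<Rightarrow> nat set set \<Rightarrow> (nat set \<Rightarrow> ennreal) \<Rightarrow> ennreal" where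
  "Ehat D S h = (\<integral>\<^sup>+ \<xi>. h \<xi> \<partial>(measure_pmf (cond_pmf D S)))"

end

theory Submission
  imports Defs
begin

(* A successful sample cannot come with the null step, since that step has \<rho> = 0 < \<eta>1; so its
   step s minimizes the model.  Fermat's rule for the model then exhibits the subgradient
   \<nabla>f(x + s) - g - \<sigma> s of F at x + s, whose norm is at most L |s| + |\<nabla>f(x) - g| + \<sigma>max |s|.
   Squaring with (a + b + c)^2 \<le> 3 (a^2 + b^2 + c^2) gives a pointwise bound, and averaging it
   over the successful samples at t(\<epsilon>), where the mean of |s|^2 is at most \<epsilon>^2, gives the claim.
   Of the hypotheses only the choice of steps, the \<sigma>-update (for \<sigma>_t \<ge> 0), \<sigma>_t \<le> \<sigma>max, the
   Lipschitz gradient and properness of R enter. *)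

lemma grad_is_gderiv:
  fixes \<phi> :: "real^'n \<Rightarrow> real"
  assumes "\<phi> differentiable (at y)"
  shows "GDERIV \<phi> y :> grad \<phi> y"
proof -
  obtain \<phi>' where \<phi>': "(\<phi> has_derivative \<phi>') (at y)"
    using assms unfolding differentiable_def by blast
  define D where "D = adjoint \<phi>' 1"
  have "\<phi>' = (\<lambda>h. h \<bullet> D)"
    using adjoint_works[OF has_derivative_linear[OF \<phi>']] by (auto simp: D_def)
  then have D: "GDERIV \<phi> y :> D"
    using \<phi>' by (simp add: gderiv_def)
  have unique: "D' = D" if "GDERIV \<phi> y :> D'" for D'
  proof -
    have "(\<lambda>h. h \<bullet> D') = (\<lambda>h. h \<bullet> D)"
      using that D unfolding gderiv_def by (rule has_derivative_unique)
    then have "(D' - D) \<bullet> (D' - D) = 0"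
      by (metis inner_diff_right right_minus_eq)
    then show ?thesis by simp
  qed
  have "grad \<phi> y = D"
    unfolding grad_def using D unique by (rule the_equality)
  with D show ?thesis by simp
qed

lemma fbar_differentiable:
  assumes "\<And>i. i \<in> {1..N} \<Longrightarrow> fi i differentiable (at y)"
  shows "fbar fi N differentiable (at y)"
  unfolding fbar_def divide_inverse_commute using assms by simp

lemma gderiv_quadratic_model:
  fixes g x :: "real^'n"
  shows "GDERIV (\<lambda>z. c + g \<bullet> (z - x) + \<sigma> / 2 * (norm (z - x))\<^sup>2) y :> g + \<sigma> *\<^sub>R (y - x)"
  unfolding gderiv_def power2_norm_eq_inner
  by (auto intro!: derivative_eq_intros simp: inner_commute algebra_simps)

lemma gderiv_remainder_tendsto_zero:
  assumes "GDERIV \<phi> y :> D"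
  shows "((\<lambda>z. (\<phi> z - \<phi> y - (z - y) \<bullet> D) / norm (z - y)) \<longlongrightarrow> 0) (at y)"
  using assms unfolding gderiv_def has_derivative_at_within
  by (simp add: divide_inverse_commute)

lemma frechet_subdiff_at_minimizer:
  fixes f h :: "real^'n \<Rightarrow> real" and R :: "real^'n \<Rightarrow> ereal"
  assumes f: "GDERIV f y :> Df" and h: "GDERIV h y :> Dh"
    and Ry: "R y = ereal ry" and R_not_minf: "\<And>z. R z \<noteq> -\<infinity>"
    and min: "\<And>z. ereal (h y) + R y \<le> ereal (h z) + R z"
  shows "Df - Dh \<in> frechet_subdiff (\<lambda>z. ereal (f z) + R z) y"
proof -
  define rem where "rem \<phi> D z = (\<phi> z - \<phi> y - (z - y) \<bullet> D) / norm (z - y)" for \<phi> D z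
  define quot where "quot = (\<lambda>z. (ereal (f z) + R z - (ereal (f y) + R y)
      - ereal ((Df - Dh) \<bullet> (z - y))) / ereal (norm (z - y)))"
  (* Minimality gives R z - R y \<ge> h y - h z, so the difference quotient of f + R dominates
     the difference of the first-order remainders of f and h. *)
  have lower: "ereal (rem f Df z - rem h Dh z) \<le> quot z" if "z \<noteq> y" for z
  proof (cases "R z")
    case PInf
    then show ?thesis using that Ry by (simp add: quot_def)
  next
    case MInf
    then show ?thesis using R_not_minf by simp
  next
    case (real rz)
    have "h y + ry \<le> h z + rz"
      using min[of z] Ry real by simp
    then have "rem f Df z - rem h Dh z
        \<le> (f z + rz - (f y + ry) - (Df - Dh) \<bullet> (z - y)) / norm (z - y)"
      unfolding rem_def diff_divide_distrib[symmetric]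
      by (intro divide_right_mono) (auto simp: inner_diff_right inner_commute)
    then show ?thesis
      using real Ry that by (simp add: quot_def)
  qed
  have "((\<lambda>z. ereal (rem f Df z - rem h Dh z)) \<longlongrightarrow> ereal (0 - 0)) (at y)"
    unfolding rem_def
    by (intro tendsto_ereal tendsto_diff gderiv_remainder_tendsto_zero f h)
  then have "Liminf (at y) (\<lambda>z. ereal (rem f Df z - rem h Dh z)) = ereal (0 - 0)"
    by (rule lim_imp_Liminf[OF trivial_limit_at])
  moreover have "Liminf (at y) (\<lambda>z. ereal (rem f Df z - rem h Dh z)) \<le> Liminf (at y) quot"
    by (intro Liminf_mono) (simp add: eventually_at_filter lower)
  ultimately have "0 \<le> Liminf (at y) quot"
    by (simp add: zero_ereal_def)
  then show ?thesis
    using Ry by (simp add: frechet_subdiff_def quot_def)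
qed

lemma model_minimizer_in_frechet_subdiff:
  assumes f: "GDERIV (fbar fi N) (x + s) :> grad (fbar fi N) (x + s)"
    and R: "proper_fun R" and s: "is_model_minimizer fi R \<xi> x \<sigma> s"
  shows "grad (fbar fi N) (x + s) - gsamp fi \<xi> x - \<sigma> *\<^sub>R s \<in> frechet_subdiff (Fobj fi N R) (x + s)"
proof -
  define h where "h z = fsamp fi \<xi> x + gsamp fi \<xi> x \<bullet> (z - x) + \<sigma> / 2 * (norm (z - x))\<^sup>2" for z
  have R_not_minf: "R z \<noteq> -\<infinity>" for z
    using R by (simp add: proper_fun_def)
  obtain z0 where z0: "\<bar>R z0\<bar> \<noteq> \<infinity>"
    using R unfolding proper_fun_def by (elim conjE exE) (rule that)
  have min: "ereal (h (x + s)) + R (x + s) \<le> ereal (h z) + R z" for z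
    using s[unfolded is_model_minimizer_def, rule_format, of "z - x"]
    by (simp add: model_def psi_def h_def add_ac)
  have "R (x + s) \<noteq> \<infinity>"
    using min[of z0] z0 by (cases "R z0"; cases "R (x + s)") auto
  then obtain r where r: "R (x + s) = ereal r"
    using R_not_minf by (cases "R (x + s)") auto
  have "GDERIV h (x + s) :> gsamp fi \<xi> x + \<sigma> *\<^sub>R s"
    using gderiv_quadratic_model[where c="fsamp fi \<xi> x" and g="gsamp fi \<xi> x" and x=x
        and \<sigma>=\<sigma> and y="x + s"]
    unfolding h_def by simp
  from frechet_subdiff_at_minimizer[OF f this r R_not_minf min]
  show ?thesis
    by (simp add: Fobj_def[abs_def] algebra_simps)
qed

lemma norm_add3_power2_le:
  fixes a b c :: "'a::real_normed_vector"
  shows "(norm (a + b + c))\<^sup>2 \<le> 3 * ((norm a)\<^sup>2 + (norm b)\<^sup>2 + (norm c)\<^sup>2)"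
proof -
  have "(norm (a + b + c))\<^sup>2 \<le> (norm a + norm b + norm c)\<^sup>2"
    by (intro power_mono) (auto intro: norm_triangle_le norm_triangle_ineq add_mono)
  also have "\<dots> \<le> 3 * ((norm a)\<^sup>2 + (norm b)\<^sup>2 + (norm c)\<^sup>2)"
    using sum_squares_ge_zero[of "norm a - norm b" "norm b - norm c"]
      zero_le_power2[of "norm a - norm c"]
    by (simp add: power2_eq_square algebra_simps)
  finally show ?thesis .
qed

lemma dist0_frechet_subdiff_model_minimizer:
  assumes f: "GDERIV (fbar fi N) (x + s) :> grad (fbar fi N) (x + s)"
    and Lip: "\<forall>y z. norm (grad (fbar fi N) y - grad (fbar fi N) z) \<le> L * norm (y - z)"
    and R: "proper_fun R" and s: "is_model_minimizer fi R \<xi> x \<sigma> s"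
    and \<sigma>: "0 \<le> \<sigma>" "\<sigma> \<le> \<sigma>max"
  shows "(dist0 (frechet_subdiff (Fobj fi N R) (x + s)))\<^sup>2
     \<le> ennreal (3 * (L\<^sup>2 + \<sigma>max\<^sup>2) * (norm s)\<^sup>2 + 3 * (norm (grad (fbar fi N) x - gsamp fi \<xi> x))\<^sup>2)"
proof -
  define a where "a = grad (fbar fi N) (x + s) - grad (fbar fi N) x"
  define b where "b = grad (fbar fi N) x - gsamp fi \<xi> x"
  have "a + b - \<sigma> *\<^sub>R s \<in> frechet_subdiff (Fobj fi N R) (x + s)"
    using model_minimizer_in_frechet_subdiff[OF f R s] by (simp add: a_def b_def)
  then have "dist0 (frechet_subdiff (Fobj fi N R) (x + s)) \<le> ennreal (norm (a + b - \<sigma> *\<^sub>R s))"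
    unfolding dist0_def by (rule INF_lower)
  then have "(dist0 (frechet_subdiff (Fobj fi N R) (x + s)))\<^sup>2 \<le> ennreal ((norm (a + b - \<sigma> *\<^sub>R s))\<^sup>2)"
    by (metis ennreal_power norm_ge_zero power_mono zero_le)
  also have "\<dots> \<le> ennreal (3 * (L\<^sup>2 + \<sigma>max\<^sup>2) * (norm s)\<^sup>2 + 3 * (norm b)\<^sup>2)"
  proof (rule ennreal_leI)
    have "norm a \<le> L * norm s"
      using Lip unfolding a_def by (metis add_diff_cancel_left')
    then have "(norm a)\<^sup>2 \<le> (L * norm s)\<^sup>2"
      by (rule power_mono) simp
    moreover have "(norm (- \<sigma> *\<^sub>R s))\<^sup>2 \<le> (\<sigma>max * norm s)\<^sup>2"
      using \<sigma> by (intro power_mono) (simp_all add: mult_right_mono)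
    ultimately have "3 * ((norm a)\<^sup>2 + (norm b)\<^sup>2 + (norm (- \<sigma> *\<^sub>R s))\<^sup>2)
        \<le> 3 * ((L * norm s)\<^sup>2 + (norm b)\<^sup>2 + (\<sigma>max * norm s)\<^sup>2)"
      by (intro mult_left_mono add_mono) auto
    then show "(norm (a + b - \<sigma> *\<^sub>R s))\<^sup>2 \<le> 3 * (L\<^sup>2 + \<sigma>max\<^sup>2) * (norm s)\<^sup>2 + 3 * (norm b)\<^sup>2"
      using norm_add3_power2_le[of a b "- \<sigma> *\<^sub>R s"]
      by (simp add: algebra_simps)
  qed
  finally show ?thesis
    by (simp add: b_def)
qed

lemma rho_zero_step:
  assumes "proper_fun R"
  shows "rho fi N R \<xi> x 0 = 0"
proof -
  have "R x \<noteq> -\<infinity>"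
    using assms by (simp add: proper_fun_def)
  then show ?thesis
    unfolding rho_def psi_def Fobj_def Let_def by (cases "R x") auto
qed

lemma succ_sample_step_is_model_minimizer:
  assumes "proper_fun R" and "0 < \<eta>1"
    and "\<forall>\<xi>\<in>set_pmf D. is_model_minimizer fi R \<xi> x \<sigma> (step \<xi>) \<or> step \<xi> = 0"
    and "\<xi> \<in> succ_samples fi N R \<eta>1 D x step"
  shows "is_model_minimizer fi R \<xi> x \<sigma> (step \<xi>)"
  using assms rho_zero_step[OF assms(1), of fi N \<xi> x] by (auto simp: succ_samples_def)

lemma sr2_sigma_ge_min:
  fixes r :: "nat \<Rightarrow> ereal" and \<sigma> :: "nat \<Rightarrow> real"
  assumes "\<sigma>min \<le> \<sigma> 0" and "0 < \<sigma>min" and "1 < \<gamma>1"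
    and upd: "\<And>t. (r t \<ge> ereal \<eta>2 \<longrightarrow> max \<sigma>min (\<gamma>3 * \<sigma> t) \<le> \<sigma> (Suc t) \<and> \<sigma> (Suc t) \<le> \<sigma> t) \<and>
         (ereal \<eta>1 \<le> r t \<and> r t < ereal \<eta>2 \<longrightarrow> \<sigma> t \<le> \<sigma> (Suc t) \<and> \<sigma> (Suc t) \<le> \<gamma>1 * \<sigma> t) \<and>
         (r t < ereal \<eta>1 \<longrightarrow> \<gamma>1 * \<sigma> t \<le> \<sigma> (Suc t) \<and> \<sigma> (Suc t) \<le> \<gamma>2 * \<sigma> t)"
  shows "\<sigma>min \<le> \<sigma> t"
proof (induction t)
  case 0
  show ?case using assms(1) .
next
  case (Suc t)
  have "\<sigma> t \<le> \<gamma>1 * \<sigma> t"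
    using Suc.IH assms(2,3) mult_right_mono[of 1 \<gamma>1 "\<sigma> t"] by simp
  then show ?case
    using upd[of t] Suc.IH by (cases "r t \<ge> ereal \<eta>2"; cases "r t \<ge> ereal \<eta>1") auto
qed

lemma Ehat_le_affine:
  assumes "set_pmf D \<inter> S \<noteq> {}"
    and "\<And>\<xi>. \<xi> \<in> set_pmf D \<Longrightarrow> \<xi> \<in> S \<Longrightarrow> h \<xi> \<le> a * u \<xi> + b * w \<xi>"
  shows "Ehat D S h \<le> a * Ehat D S u + b * Ehat D S w"
proof -
  have "Ehat D S h \<le> (\<integral>\<^sup>+ \<xi>. a * u \<xi> + b * w \<xi> \<partial>measure_pmf (cond_pmf D S))"
    unfolding Ehat_def using assms set_cond_pmf[OF assms(1)]
    by (intro nn_integral_mono_AE AE_pmfI) auto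
  also have "\<dots> = a * Ehat D S u + b * Ehat D S w"
    unfolding Ehat_def by (simp add: nn_integral_add nn_integral_cmult)
  finally show ?thesis .
qed

theorem theorem4:
  fixes fi :: "nat \<Rightarrow> real^'n \<Rightarrow> real" and N :: nat and R :: "real^'n \<Rightarrow> ereal"
    and \<eta>1 \<eta>2 \<gamma>1 \<gamma>2 \<gamma>3 \<sigma>min \<sigma>max L \<epsilon> :: real
    and x :: "nat \<Rightarrow> real^'n" and \<sigma> :: "nat \<Rightarrow> real"
    and D :: "nat \<Rightarrow> nat set pmf"
    and step :: "nat \<Rightarrow> nat set \<Rightarrow> real^'n"
    and \<xi>s :: "nat \<Rightarrow> nat set" and T :: nat
  assumes N: "N \<ge> 1"
    and fi_diff: "\<forall>i\<in>{1..N}. \<forall>y. fi i differentiable (at y)"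
    \<comment> \<open>SR2 parameters\<close>
    and eta: "0 < \<eta>1" "\<eta>1 \<le> \<eta>2" "\<eta>2 < 1"
    and gam: "0 < \<gamma>3" "\<gamma>3 \<le> 1" "1 < \<gamma>1" "\<gamma>1 \<le> \<gamma>2"
    and x0: "\<bar>R (x 0)\<bar> \<noteq> \<infinity>"
    and sig0: "\<sigma> 0 \<ge> \<sigma>min" "\<sigma>min > 0"
    \<comment> \<open>samples: D t is the distribution of the sample at iteration t, \<xi>s t the drawn one\<close>
    and samples: "\<forall>t. \<forall>\<xi>\<in>set_pmf (D t). \<xi> \<noteq> {} \<and> \<xi> \<subseteq> {1..N}"
    and drawn: "\<forall>t. \<xi>s t \<in> set_pmf (D t)"
    \<comment> \<open>steps: a minimizer of the model, or 0 if the sample is deemed inadequate\<close>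
    and steps: "\<forall>t. \<forall>\<xi>\<in>set_pmf (D t).
                  is_model_minimizer fi R \<xi> (x t) (\<sigma> t) (step t \<xi>) \<or> step t \<xi> = 0"
    and x_upd: "\<forall>t. x (Suc t) =
         (if rho fi N R (\<xi>s t) (x t) (step t (\<xi>s t)) \<ge> ereal \<eta>1
          then x t + step t (\<xi>s t) else x t)"
    and sig_upd: "\<forall>t. let r = rho fi N R (\<xi>s t) (x t) (step t (\<xi>s t)) in
         (r \<ge> ereal \<eta>2 \<longrightarrow> max \<sigma>min (\<gamma>3 * \<sigma> t) \<le> \<sigma> (Suc t) \<and> \<sigma> (Suc t) \<le> \<sigma> t) \<and>
         (ereal \<eta>1 \<le> r \<and> r < ereal \<eta>2 \<longrightarrow> \<sigma> t \<le> \<sigma> (Suc t) \<and> \<sigma> (Suc t) \<le> \<gamma>1 * \<sigma> t) \<and>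
         (r < ereal \<eta>1 \<longrightarrow> \<gamma>1 * \<sigma> t \<le> \<sigma> (Suc t) \<and> \<sigma> (Suc t) \<le> \<gamma>2 * \<sigma> t)"
    \<comment> \<open>(A1)\<close>
    and A1_L: "L > 0" "\<forall>y z. norm (grad (fbar fi N) y - grad (fbar fi N) z) \<le> L * norm (y - z)"
    and A1_R: "proper_fun R" "lsc_everywhere R"
    and A1_prox: "\<forall>t. prox_bounded (\<lambda>s. R (x t + s))"
    \<comment> \<open>(A3)\<close>
    and A3_model: "\<exists>\<kappa>m>0. \<forall>t.
         \<bar>fbar fi N (x t + step t (\<xi>s t)) - fbar fi N (x t)
            - gsamp fi (\<xi>s t) (x t) \<bullet> step t (\<xi>s t)\<bar> \<le> \<kappa>m * (norm (step t (\<xi>s t)))^2"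
    and A3_unbiased_f: "\<forall>t. measure_pmf.expectation (D t) (\<lambda>\<xi>. fsamp fi \<xi> (x t)) = fbar fi N (x t)"
    and A3_unbiased_g: "\<forall>t. measure_pmf.expectation (D t) (\<lambda>\<xi>. gsamp fi \<xi> (x t)) = grad (fbar fi N) (x t)"
    \<comment> \<open>(A5)\<close>
    and A5: "\<exists>lam>0. \<forall>t. prox_threshold (\<lambda>s. R (x t + s)) \<ge> ereal lam"
    \<comment> \<open>sigma_max\<close>
    and sigmax: "\<forall>t. \<sigma> t \<le> \<sigma>max"
    \<comment> \<open>epsilon and t(epsilon)\<close>
    and eps: "0 < \<epsilon>" "\<epsilon> < 1"
    and t_exists: "\<exists>t. succ_samples fi N R \<eta>1 (D t) (x t) (step t) \<noteq> {} \<and>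
         Ehat (D t) (succ_samples fi N R \<eta>1 (D t) (x t) (step t))
              (\<lambda>\<xi>. ennreal ((norm (step t \<xi>))^2)) \<le> ennreal (\<epsilon>^2)"
    and T_def: "T = (LEAST t. succ_samples fi N R \<eta>1 (D t) (x t) (step t) \<noteq> {} \<and>
         Ehat (D t) (succ_samples fi N R \<eta>1 (D t) (x t) (step t))
              (\<lambda>\<xi>. ennreal ((norm (step t \<xi>))^2)) \<le> ennreal (\<epsilon>^2))"
  shows "Ehat (D T) (succ_samples fi N R \<eta>1 (D T) (x T) (step T))
            (\<lambda>\<xi>. (dist0 (frechet_subdiff (Fobj fi N R) (x T + step T \<xi>)))^2)
         \<le> ennreal (3 * (L^2 + \<sigma>max^2) * \<epsilon>^2)
           + 3 * Ehat (D T) (succ_samples fi N R \<eta>1 (D T) (x T) (step T))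
              (\<lambda>\<xi>. ennreal ((norm (grad (fbar fi N) (x T) - gsamp fi \<xi> (x T)))^2))"
proof -
  define S where "S = succ_samples fi N R \<eta>1 (D T) (x T) (step T)"
  define C where "C = 3 * (L\<^sup>2 + \<sigma>max\<^sup>2)"
  have T: "S \<noteq> {} \<and> Ehat (D T) S (\<lambda>\<xi>. ennreal ((norm (step T \<xi>))\<^sup>2)) \<le> ennreal (\<epsilon>\<^sup>2)"
    unfolding S_def T_def by (rule LeastI_ex[OF t_exists])
  have S_sub: "S \<subseteq> set_pmf (D T)"
    by (auto simp: S_def succ_samples_def)
  have "\<sigma>min \<le> \<sigma> T"
    using sr2_sigma_ge_min[where r="\<lambda>t. rho fi N R (\<xi>s t) (x t) (step t (\<xi>s t))",
        OF sig0 gam(3) sig_upd[unfolded Let_def, rule_format]] .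
  then have \<sigma>T: "0 \<le> \<sigma> T"
    using sig0(2) by linarith
  have f: "GDERIV (fbar fi N) y :> grad (fbar fi N) y" for y
    using fi_diff by (auto intro!: grad_is_gderiv fbar_differentiable)
  have pointwise: "(dist0 (frechet_subdiff (Fobj fi N R) (x T + step T \<xi>)))\<^sup>2
      \<le> ennreal C * ennreal ((norm (step T \<xi>))\<^sup>2)
        + 3 * ennreal ((norm (grad (fbar fi N) (x T) - gsamp fi \<xi> (x T)))\<^sup>2)"
    if "\<xi> \<in> S" for \<xi>
    using dist0_frechet_subdiff_model_minimizer[OF f A1_L(2) A1_R(1)
        succ_sample_step_is_model_minimizer[OF A1_R(1) eta(1) spec[OF steps, of T] that[unfolded S_def]]
        \<sigma>T sigmax[rule_format]]
    by (simp add: C_def ennreal_mult)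
  have "Ehat (D T) S (\<lambda>\<xi>. (dist0 (frechet_subdiff (Fobj fi N R) (x T + step T \<xi>)))\<^sup>2)
      \<le> ennreal C * Ehat (D T) S (\<lambda>\<xi>. ennreal ((norm (step T \<xi>))\<^sup>2))
        + 3 * Ehat (D T) S (\<lambda>\<xi>. ennreal ((norm (grad (fbar fi N) (x T) - gsamp fi \<xi> (x T)))\<^sup>2))"
    using T S_sub pointwise by (intro Ehat_le_affine) auto
  also have "\<dots> \<le> ennreal C * ennreal (\<epsilon>\<^sup>2)
        + 3 * Ehat (D T) S (\<lambda>\<xi>. ennreal ((norm (grad (fbar fi N) (x T) - gsamp fi \<xi> (x T)))\<^sup>2))"
    using T by (intro add_mono mult_left_mono) auto
  finally show ?thesis
    by (simp add: S_def C_def ennreal_mult)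
qed

end
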